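(* Let $\mathbf A\in\mathbb R^{m\times n}$ with $0<m<n$ and suppose there is $\Delta>0$ such that $\|\mathbf h\|_1\ge\sqrt{m/\Delta}\,\|\mathbf h\|_2$ for all nonzero $\mathbf h\in\mathrm{Null}(\mathbf A)$. Fix $c>0$ and $\alpha>0$. If $$m\ge\Big(2+\frac{c}{\alpha}\Big)^2k\Delta,$$ then $\big(1+\frac{c}{\alpha}\big)\|\mathbf h_{\mathcal S}\|_1\le\|\mathbf h_{\mathcal S^c}\|_1$ holds for all $\mathbf h\in\mathrm{Null}(\mathbf A)$ and all coordinate sets $\mathcal S$ with $|\mathcal S|\le k$. Consequently, every $k$-sparse $\mathbf x^0$ with $\|\mathbf x^0\|_\infty=c$ is the unique minimizer of problem (P2) with $\mathbf b=\mathbf A\mathbf x^0$.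
   Context: Problem (P2) is $\min_{\mathbf x}\{\|\mathbf x\|_1+\frac{1}{2\alpha}\|\mathbf x\|_2^2:\ \mathbf A\mathbf x=\mathbf b\}$. A vector is $k$-sparse if it has at most $k$ nonzero entries. $\mathbf h_{\mathcal S}$ is the restriction of $\mathbf h$ to coordinates in $\mathcal S$, $\mathcal S^c$ its complement in $\{1,\dots,n\}$. *)

theory Defs
  imports "HOL-Analysis.Analysis"
begin

text \<open>Vectors in R^n are modelled as real^'n, m x n matrices as real^'n^'m;
  the Euclidean norm norm x is the l2 norm.\<close>

definition l1norm :: "real^'n \<Rightarrow> real" where
  "l1norm x = (\<Sum>i\<in>UNIV. \<bar>x $ i\<bar>)"

definition linfnorm :: "real^'n \<Rightarrow> real" where
  "linfnorm x = Max ((\<lambda>i. \<bar>x $ i\<bar>) ` UNIV)"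

definition restrict_vec :: "real^'n \<Rightarrow> 'n set \<Rightarrow> real^'n" where
  "restrict_vec h S = (\<chi> i. if i \<in> S then h $ i else 0)"

definition null_space :: "real^'n^'m \<Rightarrow> (real^'n) set" where
  "null_space A = {h. A *v h = 0}"

definition k_sparse :: "nat \<Rightarrow> real^'n \<Rightarrow> bool" where
  "k_sparse k x \<longleftrightarrow> card {i. x $ i \<noteq> 0} \<le> k"

definition P2_obj :: "real \<Rightarrow> real^'n \<Rightarrow> real" where
  "P2_obj \<alpha> x = l1norm x + (1 / (2 * \<alpha>)) * (norm x)\<^sup>2"

definition P2_unique_minimizer :: "real \<Rightarrow> real^'n^'m \<Rightarrow> real^'m \<Rightarrow> real^'n \<Rightarrow> bool" where
  "P2_unique_minimizer \<alpha> A b x \<longleftrightarrow>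
     A *v x = b \<and> (\<forall>y. A *v y = b \<and> y \<noteq> x \<longrightarrow> P2_obj \<alpha> x < P2_obj \<alpha> y)"

end

theory Submission
  imports Defs
begin

(* Proof idea.
   (1) Null space property.  By Cauchy-Schwarz, a restriction to a set S satisfies
       l1(h_S)^2 <= |S| * |h|_2^2.  Combined with the hypothesis
       l1(h) >= sqrt(m/Delta) |h|_2 and m >= t^2 k Delta (t = 2 + c/alpha), this gives
       t l1(h_S) <= l1(h) = l1(h_S) + l1(h_{S^c}), i.e. (1 + c/alpha) l1(h_S) <= l1(h_{S^c}).
   (2) Uniqueness.  For a feasible y = x0 + h with h a nonzero null vector and S the support
       of x0, expanding the quadratic term gives
         P2(y) = l1(x0 + h) + <x0,h>/alpha + |x0|^2/(2 alpha) + |h|^2/(2 alpha),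
       and coordinatewise |x0_i + h_i| + x0_i h_i / alpha >= |x0_i| - (1 + c/alpha)|h_i| on S
       (using |x0_i| <= c) and = |x0_i| + |h_i| off S.  Summing and using (1) yields
       P2(y) >= P2(x0) + |h|^2/(2 alpha) > P2(x0). *)

lemma l1norm_nonneg: "l1norm h \<ge> 0"
  unfolding l1norm_def by (simp add: sum_nonneg)

lemma l1norm_restrict: "l1norm (restrict_vec h S) = (\<Sum>i\<in>S. \<bar>h $ i\<bar>)"
proof -
  have "l1norm (restrict_vec h S) = (\<Sum>i\<in>UNIV. if i \<in> S then \<bar>h $ i\<bar> else 0)"
    unfolding l1norm_def restrict_vec_def by (intro sum.cong) auto
  also have "\<dots> = (\<Sum>i\<in>S. \<bar>h $ i\<bar>)"
    by (simp add: sum.If_cases)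
  finally show ?thesis .
qed

lemma l1norm_split: "l1norm h = l1norm (restrict_vec h S) + l1norm (restrict_vec h (- S))"
proof -
  have "l1norm h = (\<Sum>i\<in>S \<union> - S. \<bar>h $ i\<bar>)" by (simp add: l1norm_def)
  also have "\<dots> = (\<Sum>i\<in>S. \<bar>h $ i\<bar>) + (\<Sum>i\<in>- S. \<bar>h $ i\<bar>)"
    by (rule sum.union_disjoint) auto
  finally show ?thesis by (simp only: l1norm_restrict)
qed

lemma norm_squared_coordinates: "(norm (h::real^'n))\<^sup>2 = (\<Sum>i\<in>UNIV. (h $ i)\<^sup>2)"
  unfolding power2_norm_eq_inner inner_vec_def by (simp add: power2_eq_square)

text \<open>Cauchy-Schwarz on the support: a restriction to S has l1 norm at most
  sqrt |S| times the Euclidean norm of the whole vector.\<close>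
lemma l1norm_restrict_squared_le: "(l1norm (restrict_vec h S))\<^sup>2 \<le> real (card S) * (norm h)\<^sup>2"
proof -
  have "(l1norm (restrict_vec h S))\<^sup>2 = (\<Sum>i\<in>S. 1 * \<bar>h $ i\<bar>)\<^sup>2"
    by (simp add: l1norm_restrict)
  also have "\<dots> \<le> (\<Sum>i\<in>S. 1\<^sup>2) * (\<Sum>i\<in>S. \<bar>h $ i\<bar>\<^sup>2)"
    by (rule Cauchy_Schwarz_ineq_sum)
  also have "\<dots> = real (card S) * (\<Sum>i\<in>S. (h $ i)\<^sup>2)" by simp
  also have "\<dots> \<le> real (card S) * (\<Sum>i\<in>UNIV. (h $ i)\<^sup>2)"
    by (intro mult_left_mono sum_mono2) auto
  finally show ?thesis by (simp add: norm_squared_coordinates)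
qed

lemma abs_le_linfnorm: "\<bar>x $ i\<bar> \<le> linfnorm x"
  unfolding linfnorm_def by (rule Max_ge) auto

lemma restrict_l1_fraction:
  assumes ratio: "sqrt M * norm h \<le> l1norm h"
    and card_bound: "t\<^sup>2 * real (card S) \<le> M"
    and "t \<ge> 0"
  shows "t * l1norm (restrict_vec h S) \<le> l1norm h"
proof -
  have "M \<ge> 0" using card_bound by (metis of_nat_0_le_iff order_trans zero_le_mult_iff zero_le_power2)
  have "(t * l1norm (restrict_vec h S))\<^sup>2 = t\<^sup>2 * (l1norm (restrict_vec h S))\<^sup>2"
    by (simp add: power_mult_distrib)
  also have "\<dots> \<le> t\<^sup>2 * (real (card S) * (norm h)\<^sup>2)"
    by (intro mult_left_mono l1norm_restrict_squared_le) auto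
  also have "\<dots> \<le> M * (norm h)\<^sup>2"
    using card_bound by (simp add: mult.assoc[symmetric] mult_right_mono)
  also have "\<dots> = (sqrt M * norm h)\<^sup>2"
    using \<open>M \<ge> 0\<close> by (simp add: power_mult_distrib)
  also have "\<dots> \<le> (l1norm h)\<^sup>2"
    using ratio \<open>M \<ge> 0\<close> by (intro power_mono) auto
  finally show ?thesis
    using l1norm_nonneg[of h] by (rule power2_le_imp_le)
qed

corollary null_space_property_from_ratio:
  assumes "sqrt M * norm h \<le> l1norm h" and "t\<^sup>2 * real (card S) \<le> M" and "t \<ge> 0"
  shows "(t - 1) * l1norm (restrict_vec h S) \<le> l1norm (restrict_vec h (- S))"
  using restrict_l1_fraction[OF assms] l1norm_split[of h S] by (simp add: algebra_simps)

text \<open>Coordinatewise lower bound for the linearised objective at x0 + h, where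
  |x0_i| <= c, and x0_i = 0 outside S.\<close>
lemma coordinate_lower_bound:
  fixes a b c \<alpha> :: real
  assumes "\<bar>a\<bar> \<le> c" and "\<alpha> > 0" and "\<not> P \<Longrightarrow> a = 0"
  shows "\<bar>a + b\<bar> + a * b / \<alpha> \<ge> \<bar>a\<bar> + (if P then - (1 + c / \<alpha>) * \<bar>b\<bar> else \<bar>b\<bar>)"
proof (cases P)
  case True
  have "\<bar>a * b\<bar> \<le> c * \<bar>b\<bar>"
    using assms(1) by (simp add: abs_mult mult_right_mono)
  hence "a * b / \<alpha> \<ge> - (c / \<alpha>) * \<bar>b\<bar>"
    using \<open>\<alpha> > 0\<close> by (simp add: field_simps abs_le_iff)
  moreover have "\<bar>a + b\<bar> \<ge> \<bar>a\<bar> - \<bar>b\<bar>" by linarith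
  ultimately show ?thesis using True by (simp add: algebra_simps)
qed (use assms(3) in simp)

lemma linearised_objective_lower_bound:
  assumes bound: "\<And>i. \<bar>x0 $ i\<bar> \<le> c" and "\<alpha> > 0"
    and support: "\<And>i. i \<notin> S \<Longrightarrow> x0 $ i = 0"
  shows "l1norm (x0 + h) + (x0 \<bullet> h) / \<alpha> \<ge>
         l1norm x0 + l1norm (restrict_vec h (- S)) - (1 + c / \<alpha>) * l1norm (restrict_vec h S)"
proof -
  have "l1norm (x0 + h) + (x0 \<bullet> h) / \<alpha> = (\<Sum>i\<in>UNIV. \<bar>x0 $ i + h $ i\<bar> + x0 $ i * h $ i / \<alpha>)"
    unfolding l1norm_def inner_vec_def sum_divide_distrib sum.distrib by simp
  also have "\<dots> \<ge> (\<Sum>i\<in>UNIV. \<bar>x0 $ i\<bar> + (if i \<in> S then - (1 + c / \<alpha>) * \<bar>h $ i\<bar> else \<bar>h $ i\<bar>))"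
    using assms by (intro sum_mono coordinate_lower_bound) auto
  moreover have "(\<Sum>i\<in>UNIV. (if i \<in> S then - (1 + c / \<alpha>) * \<bar>h $ i\<bar> else \<bar>h $ i\<bar>))
      = (\<Sum>i\<in>S. - (1 + c / \<alpha>) * \<bar>h $ i\<bar>) + (\<Sum>i\<in>- S. \<bar>h $ i\<bar>)"
    by (simp add: sum.If_cases Compl_eq_Diff_UNIV)
  moreover have "\<dots> = l1norm (restrict_vec h (- S)) - (1 + c / \<alpha>) * l1norm (restrict_vec h S)"
    unfolding l1norm_restrict sum_distrib_left[symmetric] by (simp add: algebra_simps)
  ultimately show ?thesis unfolding sum.distrib l1norm_def by linarith
qed

lemma P2_obj_shift:
  assumes "\<alpha> > 0"
  shows "P2_obj \<alpha> (x0 + h) = l1norm (x0 + h) + (x0 \<bullet> h) / \<alpha>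
                              + (norm x0)\<^sup>2 / (2 * \<alpha>) + (norm h)\<^sup>2 / (2 * \<alpha>)"
proof -
  have "(norm (x0 + h))\<^sup>2 = (norm x0)\<^sup>2 + 2 * (x0 \<bullet> h) + (norm h)\<^sup>2"
    by (simp add: power2_norm_eq_inner inner_add_left inner_add_right inner_commute)
  then show ?thesis
    unfolding P2_obj_def using assms by (simp add: field_simps)
qed

lemma null_space_property_imp_P2_unique:
  fixes A :: "real^'n^'m"
  assumes "\<alpha> > 0" and bound: "\<And>i. \<bar>x0 $ i\<bar> \<le> c"
    and support: "\<And>i. i \<notin> S \<Longrightarrow> x0 $ i = 0"
    and nsp: "\<And>h. h \<in> null_space A \<Longrightarrow>
                (1 + c / \<alpha>) * l1norm (restrict_vec h S) \<le> l1norm (restrict_vec h (- S))"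
  shows "P2_unique_minimizer \<alpha> A (A *v x0) x0"
  unfolding P2_unique_minimizer_def
proof (intro conjI allI impI)
  fix y assume y: "A *v y = A *v x0 \<and> y \<noteq> x0"
  define h where "h = y - x0"
  have "h \<in> null_space A" and "h \<noteq> 0"
    using y by (simp_all add: h_def null_space_def matrix_vector_mult_diff_distrib)
  have y_eq: "y = x0 + h" by (simp add: h_def)
  have "(norm h)\<^sup>2 / (2 * \<alpha>) > 0" using \<open>h \<noteq> 0\<close> \<open>\<alpha> > 0\<close> by simp
  moreover have "P2_obj \<alpha> x0 = l1norm x0 + (norm x0)\<^sup>2 / (2 * \<alpha>)"
    unfolding P2_obj_def by simp
  ultimately show "P2_obj \<alpha> x0 < P2_obj \<alpha> y"
    using P2_obj_shift[OF \<open>\<alpha> > 0\<close>, of x0 h] nsp[OF \<open>h \<in> null_space A\<close>]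
      linearised_objective_lower_bound[where S = S and h = h, OF bound \<open>\<alpha> > 0\<close> support]
    unfolding y_eq by linarith
qed simp

theorem mainTheorem5:
  fixes A :: "real^'n^'m" and \<Delta> c \<alpha> :: real and k :: nat
  assumes mn: "CARD('m) < CARD('n)"
    and \<Delta>pos: "\<Delta> > 0"
    and nsp: "\<forall>h\<in>null_space A. h \<noteq> 0 \<longrightarrow>
               l1norm h \<ge> sqrt (real CARD('m) / \<Delta>) * norm h"
    and cpos: "c > 0" and \<alpha>pos: "\<alpha> > 0"
    and mbound: "real CARD('m) \<ge> (2 + c / \<alpha>)\<^sup>2 * real k * \<Delta>"
  shows "(\<forall>h\<in>null_space A. \<forall>S :: 'n set. card S \<le> k \<longrightarrow>
            (1 + c / \<alpha>) * l1norm (restrict_vec h S) \<le> l1norm (restrict_vec h (- S)))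
         \<and> (\<forall>x0 :: real^'n. k_sparse k x0 \<and> linfnorm x0 = c \<longrightarrow>
            P2_unique_minimizer \<alpha> A (A *v x0) x0)"
proof -
  have ratio: "sqrt (real CARD('m) / \<Delta>) * norm h \<le> l1norm h" if "h \<in> null_space A" for h
    using nsp that by (cases "h = 0") (auto simp: l1norm_def)
  have NSP: "(1 + c / \<alpha>) * l1norm (restrict_vec h S) \<le> l1norm (restrict_vec h (- S))"
    if "h \<in> null_space A" and "card S \<le> k" for h and S :: "'n set"
  proof -
    have "(2 + c / \<alpha>)\<^sup>2 * real (card S) \<le> (2 + c / \<alpha>)\<^sup>2 * real k"
      using \<open>card S \<le> k\<close> by (intro mult_left_mono) auto
    also have "\<dots> \<le> real CARD('m) / \<Delta>"
      using mbound \<Delta>pos by (simp add: field_simps)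
    finally show ?thesis
      using null_space_property_from_ratio[OF ratio[OF \<open>h \<in> null_space A\<close>], of "2 + c / \<alpha>" S]
        cpos \<alpha>pos by simp
  qed
  have "P2_unique_minimizer \<alpha> A (A *v x0) x0"
    if "k_sparse k x0" and "linfnorm x0 = c" for x0 :: "real^'n"
  proof (rule null_space_property_imp_P2_unique[where S = "{i. x0 $ i \<noteq> 0}"])
    show "\<bar>x0 $ i\<bar> \<le> c" for i
      using abs_le_linfnorm[of x0 i] \<open>linfnorm x0 = c\<close> by simp
    show "(1 + c / \<alpha>) * l1norm (restrict_vec h {i. x0 $ i \<noteq> 0})
          \<le> l1norm (restrict_vec h (- {i. x0 $ i \<noteq> 0}))" if "h \<in> null_space A" for h
      using NSP[OF that] \<open>k_sparse k x0\<close> by (simp add: k_sparse_def)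
  qed (use \<alpha>pos in auto)
  with NSP show ?thesis by blast
qed

end
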